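(* Let $G$ be a digraph and let $r_1,r_2$ be positive integers with $r_1+r_2\ge \Delta_{max}(G)\ge 1$. If $(V_1,V_2)$ is an $(r_1,r_2)$-normal partition of $V(G)$, then $G[V_1]$ is $r_1$-special and $G[V_2]$ is $r_2$-special.
   Context: Digraphs have no loops and no parallel arcs, but may contain digons. $d_{min}(v)=\min(d^+(v),d^-(v))$, $d_{max}(v)=\max(d^+(v),d^-(v))$, $\Delta_{max}(G)=\max_v d_{max}(v)$. A digraph $H$ is $r$-special if for every vertex $v$ of $H$, either $d_{min}(v)<r$ or $d^+(v)=d^-(v)=r$ (degrees in $H$). For positive integers $r_1,r_2$, a partition $(V_1,V_2)$ of $V(G)$ is $(r_1,r_2)$-normal if it minimizes $r_2|A(G[V_1])|+r_1|A(G[V_2])|$ over all partitions of $V(G)$ into two parts, where $A(\cdot)$ denotes the arc set. *)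

theory Defs
  imports Main
begin

text \<open>A digraph is given by a finite vertex set V and an arc set A of ordered pairs
  (so no parallel arcs), with A \<subseteq> V \<times> V and no loops. Digons (both (u,v) and (v,u))
  are allowed.\<close>

definition digraph :: "'a set \<Rightarrow> ('a \<times> 'a) set \<Rightarrow> bool" where
  "digraph V A \<longleftrightarrow> finite V \<and> A \<subseteq> V \<times> V \<and> (\<forall>v. (v, v) \<notin> A)"

definition induced_arcs :: "('a \<times> 'a) set \<Rightarrow> 'a set \<Rightarrow> ('a \<times> 'a) set" where
  "induced_arcs A S = {(u, w). (u, w) \<in> A \<and> u \<in> S \<and> w \<in> S}"

definition out_deg :: "('a \<times> 'a) set \<Rightarrow> 'a \<Rightarrow> nat" where
  "out_deg A v = card {w. (v, w) \<in> A}"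

definition in_deg :: "('a \<times> 'a) set \<Rightarrow> 'a \<Rightarrow> nat" where
  "in_deg A v = card {u. (u, v) \<in> A}"

definition d_min :: "('a \<times> 'a) set \<Rightarrow> 'a \<Rightarrow> nat" where
  "d_min A v = min (out_deg A v) (in_deg A v)"

definition d_max :: "('a \<times> 'a) set \<Rightarrow> 'a \<Rightarrow> nat" where
  "d_max A v = max (out_deg A v) (in_deg A v)"

definition Delta_max :: "'a set \<Rightarrow> ('a \<times> 'a) set \<Rightarrow> nat" where
  "Delta_max V A = Max (insert 0 (d_max A ` V))"

definition r_special :: "nat \<Rightarrow> 'a set \<Rightarrow> ('a \<times> 'a) set \<Rightarrow> bool" where
  "r_special r W B \<longleftrightarrow>
     (\<forall>v\<in>W. d_min B v < r \<or> (out_deg B v = r \<and> in_deg B v = r))"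

definition normal_partition ::
  "nat \<Rightarrow> nat \<Rightarrow> 'a set \<Rightarrow> ('a \<times> 'a) set \<Rightarrow> 'a set \<Rightarrow> 'a set \<Rightarrow> bool" where
  "normal_partition r1 r2 V A V1 V2 \<longleftrightarrow>
     V1 \<union> V2 = V \<and> V1 \<inter> V2 = {} \<and>
     (\<forall>U1 U2. U1 \<union> U2 = V \<and> U1 \<inter> U2 = {} \<longrightarrow>
        r2 * card (induced_arcs A V1) + r1 * card (induced_arcs A V2)
        \<le> r2 * card (induced_arcs A U1) + r1 * card (induced_arcs A U2))"

end

theory Submission
  imports Defs
begin

text \<open>Move a single vertex v from its part X (of weight a) to the other part Y (of weight
  b). The arcs of G[X] at v are lost and the arcs of G[Y + v] at v are gained, so normality
  gives b (out_X v + in_X v) \<le> a (out_Y+v v + in_Y+v v). The out-neighbours (in-neighbours)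
  of v in the two parts are disjoint, so out_X v + out_Y+v v and in_X v + in_Y+v v are both at
  most Delta_max \<le> a + b. If v violated a-specialness in G[X], i.e. both its degrees there
  are at least a with sum above 2a, these inequalities would be incompatible.\<close>

lemma digraph_finite_arcs: "digraph V A \<Longrightarrow> finite A"
  unfolding digraph_def by (meson finite_SigmaI finite_subset)

lemma finite_out_neighbours: "finite A \<Longrightarrow> finite {w. (v, w) \<in> A}"
  by (rule finite_subset[of _ "snd ` A"]) (auto intro: rev_image_eqI)

lemma finite_in_neighbours: "finite A \<Longrightarrow> finite {u. (u, v) \<in> A}"
  by (rule finite_subset[of _ "fst ` A"]) (auto intro: rev_image_eqI)

lemma induced_arcs_subset: "induced_arcs A S \<subseteq> A"
  by (auto simp: induced_arcs_def)

lemma card_induced_arcs_remove: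
  assumes fin: "finite A" and loopless: "(v, v) \<notin> A" and v: "v \<in> S"
  shows "card (induced_arcs A S) = card (induced_arcs A (S - {v}))
     + out_deg (induced_arcs A S) v + in_deg (induced_arcs A S) v"
proof -
  define Out where "Out = {w. (v, w) \<in> induced_arcs A S}"
  define In where "In = {u. (u, v) \<in> induced_arcs A S}"
  have fin_sub: "finite (induced_arcs A T)" for T
    using finite_subset[OF induced_arcs_subset fin] .
  have fin_rest: "finite (induced_arcs A (S - {v}))" using fin_sub .
  have fin_Out: "finite Out" and fin_In: "finite In"
    unfolding Out_def In_def by (simp_all add: fin_sub finite_out_neighbours finite_in_neighbours)
  have split: "induced_arcs A S = (induced_arcs A (S - {v}) \<union> Pair v ` Out) \<union> (\<lambda>u. (u, v)) ` In"
    unfolding Out_def In_def induced_arcs_def using v by auto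
  have "card (induced_arcs A S)
      = card (induced_arcs A (S - {v}) \<union> Pair v ` Out) + card ((\<lambda>u. (u, v)) ` In)"
    unfolding split
    by (rule card_Un_disjoint) (use fin_rest fin_Out fin_In loopless in
        \<open>auto simp: induced_arcs_def Out_def In_def\<close>)
  also have "card (induced_arcs A (S - {v}) \<union> Pair v ` Out)
      = card (induced_arcs A (S - {v})) + card (Pair v ` Out)"
    by (rule card_Un_disjoint) (use fin_rest fin_Out in \<open>auto simp: induced_arcs_def\<close>)
  also have "card (Pair v ` Out) = card Out"
    by (rule card_image) (auto simp: inj_on_def)
  also have "card ((\<lambda>u. (u, v)) ` In) = card In"
    by (rule card_image) (auto simp: inj_on_def)
  finally show ?thesis
    unfolding out_deg_def in_deg_def Out_def In_def by simp
qed

lemma degrees_in_disjoint_parts_le: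
  assumes fin: "finite A" and loopless: "(v, v) \<notin> A" and disj: "X \<inter> Y = {}"
  shows "out_deg (induced_arcs A X) v + out_deg (induced_arcs A (insert v Y)) v \<le> out_deg A v"
    and "in_deg (induced_arcs A X) v + in_deg (induced_arcs A (insert v Y)) v \<le> in_deg A v"
proof -
  have "card {w. (v, w) \<in> induced_arcs A X} + card {w. (v, w) \<in> induced_arcs A (insert v Y)}
      = card ({w. (v, w) \<in> induced_arcs A X} \<union> {w. (v, w) \<in> induced_arcs A (insert v Y)})"
    by (rule card_Un_disjoint[symmetric])
      (use finite_out_neighbours[OF fin] disj loopless in \<open>auto simp: induced_arcs_def intro: finite_subset\<close>)
  also have "\<dots> \<le> card {w. (v, w) \<in> A}"
    by (rule card_mono[OF finite_out_neighbours[OF fin]]) (auto simp: induced_arcs_def)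
  finally show "out_deg (induced_arcs A X) v + out_deg (induced_arcs A (insert v Y)) v \<le> out_deg A v"
    unfolding out_deg_def .
  have "card {u. (u, v) \<in> induced_arcs A X} + card {u. (u, v) \<in> induced_arcs A (insert v Y)}
      = card ({u. (u, v) \<in> induced_arcs A X} \<union> {u. (u, v) \<in> induced_arcs A (insert v Y)})"
    by (rule card_Un_disjoint[symmetric])
      (use finite_in_neighbours[OF fin] disj loopless in \<open>auto simp: induced_arcs_def intro: finite_subset\<close>)
  also have "\<dots> \<le> card {u. (u, v) \<in> A}"
    by (rule card_mono[OF finite_in_neighbours[OF fin]]) (auto simp: induced_arcs_def)
  finally show "in_deg (induced_arcs A X) v + in_deg (induced_arcs A (insert v Y)) v \<le> in_deg A v"
    unfolding in_deg_def .
qed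

lemma d_max_le_Delta_max: "finite V \<Longrightarrow> v \<in> V \<Longrightarrow> d_max A v \<le> Delta_max V A"
  unfolding Delta_max_def by (intro Max_ge) auto

lemma weighted_degree_sum_less:
  fixes a b o1 i1 o2 i2 :: nat
  assumes "a > 0" and "o1 \<ge> a" and "i1 \<ge> a" and "o1 + i1 > 2 * a"
    and "o1 + o2 \<le> a + b" and "i1 + i2 \<le> a + b"
  shows "a * (o2 + i2) < b * (o1 + i1)"
proof -
  have "a * (o2 + i2) + a * (o1 + i1) = a * ((o1 + o2) + (i1 + i2))"
    by (simp add: algebra_simps)
  also have "\<dots> \<le> a * (2 * (a + b))"
    using add_mono[OF assms(5,6)] by (intro mult_le_mono2) (simp add: algebra_simps)
  also have "\<dots> = (a + b) * (2 * a)"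
    by (simp add: algebra_simps)
  also have "\<dots> < (a + b) * (o1 + i1)"
    using assms(1,4) by simp
  also have "\<dots> = a * (o1 + i1) + b * (o1 + i1)"
    by (simp add: algebra_simps)
  finally show ?thesis by linarith
qed

lemma special_vertex_if_move_not_better:
  assumes G: "digraph V A" and part: "X \<union> Y = V" "X \<inter> Y = {}" and v: "v \<in> X"
    and a: "a > 0" and Delta: "Delta_max V A \<le> a + b"
    and no_gain: "b * card (induced_arcs A X) + a * card (induced_arcs A Y)
       \<le> b * card (induced_arcs A (X - {v})) + a * card (induced_arcs A (insert v Y))"
  shows "d_min (induced_arcs A X) v < a \<or>
     (out_deg (induced_arcs A X) v = a \<and> in_deg (induced_arcs A X) v = a)"
proof (rule ccontr)
  assume violated: "\<not> ?thesis"
  let ?o1 = "out_deg (induced_arcs A X) v" and ?i1 = "in_deg (induced_arcs A X) v"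
  let ?o2 = "out_deg (induced_arcs A (insert v Y)) v"
  let ?i2 = "in_deg (induced_arcs A (insert v Y)) v"
  have fin: "finite A" using digraph_finite_arcs[OF G] .
  have loopless: "(v, v) \<notin> A" using G unfolding digraph_def by auto
  have vY: "v \<notin> Y" and vV: "v \<in> V" using part v by auto
  have "card (induced_arcs A X) = card (induced_arcs A (X - {v})) + ?o1 + ?i1"
    using card_induced_arcs_remove[OF fin loopless v] .
  moreover have "card (induced_arcs A (insert v Y)) = card (induced_arcs A Y) + ?o2 + ?i2"
    using card_induced_arcs_remove[OF fin loopless, of "insert v Y"] vY by simp
  ultimately have "b * (?o1 + ?i1) \<le> a * (?o2 + ?i2)"
    using no_gain by (simp add: algebra_simps)
  moreover have "d_max A v \<le> a + b"
    using d_max_le_Delta_max[of V v A] G vV Delta unfolding digraph_def by simp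
  then have "?o1 + ?o2 \<le> a + b" and "?i1 + ?i2 \<le> a + b"
    using degrees_in_disjoint_parts_le[OF fin loopless part(2)] unfolding d_max_def by fastforce+
  moreover have "?o1 \<ge> a" "?i1 \<ge> a" "?o1 + ?i1 > 2 * a"
    using violated unfolding d_min_def by auto
  ultimately show False
    using weighted_degree_sum_less[OF a] by (meson leD)
qed

lemma r_special_if_no_single_move_better:
  assumes G: "digraph V A" and part: "X \<union> Y = V" "X \<inter> Y = {}"
    and a: "a > 0" and Delta: "Delta_max V A \<le> a + b"
    and no_gain: "\<And>v. v \<in> X \<Longrightarrow>
       b * card (induced_arcs A X) + a * card (induced_arcs A Y)
       \<le> b * card (induced_arcs A (X - {v})) + a * card (induced_arcs A (insert v Y))"
  shows "r_special a X (induced_arcs A X)"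
  unfolding r_special_def
  using special_vertex_if_move_not_better[OF G part _ a Delta no_gain] by blast

theorem mainTheorem7:
  fixes V :: "'a set" and A :: "('a \<times> 'a) set" and r1 r2 :: nat and V1 V2 :: "'a set"
  assumes "digraph V A"
    and "r1 > 0" and "r2 > 0"
    and "Delta_max V A \<ge> 1" and "r1 + r2 \<ge> Delta_max V A"
    and "normal_partition r1 r2 V A V1 V2"
  shows "r_special r1 V1 (induced_arcs A V1) \<and> r_special r2 V2 (induced_arcs A V2)"
proof -
  let ?cost = "\<lambda>U1 U2. r2 * card (induced_arcs A U1) + r1 * card (induced_arcs A U2)"
  have part: "V1 \<union> V2 = V" "V1 \<inter> V2 = {}"
    and optimal: "\<And>U1 U2. U1 \<union> U2 = V \<Longrightarrow> U1 \<inter> U2 = {} \<Longrightarrow> ?cost V1 V2 \<le> ?cost U1 U2"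
    using assms(6) unfolding normal_partition_def by auto
  have "r_special r1 V1 (induced_arcs A V1)"
  proof (rule r_special_if_no_single_move_better[OF assms(1) part assms(2)])
    show "Delta_max V A \<le> r1 + r2" using assms(5) .
    show "?cost V1 V2 \<le> ?cost (V1 - {v}) (insert v V2)" if "v \<in> V1" for v
      using that part by (intro optimal) auto
  qed
  moreover have "r_special r2 V2 (induced_arcs A V2)"
  proof (rule r_special_if_no_single_move_better[of V A V2 V1])
    show "V2 \<union> V1 = V" "V2 \<inter> V1 = {}" using part by auto
    show "Delta_max V A \<le> r2 + r1" using assms(5) by simp
    show "r1 * card (induced_arcs A V2) + r2 * card (induced_arcs A V1)
        \<le> r1 * card (induced_arcs A (V2 - {v})) + r2 * card (induced_arcs A (insert v V1))"
      if "v \<in> V2" for v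
    proof -
      have "?cost V1 V2 \<le> ?cost (insert v V1) (V2 - {v})"
        using that part by (intro optimal) auto
      then show ?thesis by (simp add: add.commute)
    qed
  qed (use assms(1,3) in auto)
  ultimately show ?thesis ..
qed

end
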